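(* Let $p,q\in[1,\infty)$. Without the Objectivity Assumption, the $L(p,q)$-aggregation method is not continuous as a function of the score vectors: there exist data (reviewers, papers, score vectors and recommendations satisfying the standing assumptions) such that, keeping all recommendations fixed, the map sending the score vectors $(\bar x_{ia})_{i,a}$ to the solution vector $(s_a)_{a\in\mathcal P}$ is discontinuous at these score vectors.
   Context: Peer-review setting: a finite set $\mathcal{R}$ of reviewers, a finite set $\mathcal{P}$ of papers, and $d\ge1$ criteria. Every reviewer $i$ reviews every paper $a$, giving a score vector $\bar{x}_{ia}\in[0,10]^d$ and a recommendation $y_{ia}\in[0,10]$. A function $h:[0,10]^d\to[0,10]$ is monotonic if $\bar x\le\bar y$ componentwise implies $h(\bar x)\le h(\bar y)$. Standing assumption: each reviewer $i$ has a monotonic $h_i$ with $y_{ia}=h_i(\bar x_{ia})$ for all $a$. Score vectors of different reviewers for the same paper may differ (no Objectivity Assumption). The $L(p,q)$-aggregation method: (1) ERM step: find a monotonic $\hat h$ minimizing $\big[\sum_{i\in\mathcal{R}}\big(\sum_{a\in\mathcal{P}}|y_{ia}-h(\bar x_{ia})|^p\big)^{q/p}\big]^{1/q}$ over monotonic $h$ (only the values $h(\bar x_{ia})$ matter); among minimizers the value vector $(\hat h(\bar x_{ia}))_{i,a}$ of smallest Euclidean norm is chosen; set $\hat y_{ia}=\hat h(\bar x_{ia})$. (2) Aggregation step: the solution $(s_a)_{a\in\mathcal P}$ minimizes $\big[\sum_{i}\big(\sum_{a}|\hat y_{ia}-s_a|^p\big)^{q/p}\big]^{1/q}$ (ties broken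 by smallest Euclidean norm). *)

theory Defs
  imports Complex_Main
begin

text \<open>Reviewers are indexed by i < m, papers by a < n, criteria by k < d.
  A score vector is a function nat => real whose relevant components are those k < d.\<close>

definition score_box :: "nat \<Rightarrow> (nat \<Rightarrow> real) set" where
  "score_box d = {u. \<forall>k<d. 0 \<le> u k \<and> u k \<le> 10}"

definition monotonic_fn :: "nat \<Rightarrow> ((nat \<Rightarrow> real) \<Rightarrow> real) \<Rightarrow> bool" where
  "monotonic_fn d h \<longleftrightarrow>
     (\<forall>u\<in>score_box d. 0 \<le> h u \<and> h u \<le> 10) \<and>
     (\<forall>u\<in>score_box d. \<forall>v\<in>score_box d. (\<forall>k<d. u k \<le> v k) \<longrightarrow> h u \<le> h v)"

definition Lpq_loss :: "real \<Rightarrow> real \<Rightarrow> nat \<Rightarrow> nat \<Rightarrow>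
    (nat \<Rightarrow> nat \<Rightarrow> real) \<Rightarrow> (nat \<Rightarrow> nat \<Rightarrow> real) \<Rightarrow> real" where
  "Lpq_loss p q m n y v =
     (\<Sum>i<m. (\<Sum>a<n. \<bar>y i a - v i a\<bar> powr p) powr (q / p)) powr (1 / q)"

definition erm_feasible :: "nat \<Rightarrow> nat \<Rightarrow> nat \<Rightarrow> (nat \<Rightarrow> nat \<Rightarrow> nat \<Rightarrow> real) \<Rightarrow>
    (nat \<Rightarrow> nat \<Rightarrow> real) \<Rightarrow> bool" where
  "erm_feasible d m n x v \<longleftrightarrow>
     (\<exists>h. monotonic_fn d h \<and> (\<forall>i<m. \<forall>a<n. v i a = h (x i a))) \<and>
     (\<forall>i a. m \<le> i \<or> n \<le> a \<longrightarrow> v i a = 0)"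

definition sqnorm2 :: "nat \<Rightarrow> nat \<Rightarrow> (nat \<Rightarrow> nat \<Rightarrow> real) \<Rightarrow> real" where
  "sqnorm2 m n v = (\<Sum>i<m. \<Sum>a<n. (v i a)\<^sup>2)"

definition erm_step :: "real \<Rightarrow> real \<Rightarrow> nat \<Rightarrow> nat \<Rightarrow> nat \<Rightarrow>
    (nat \<Rightarrow> nat \<Rightarrow> nat \<Rightarrow> real) \<Rightarrow> (nat \<Rightarrow> nat \<Rightarrow> real) \<Rightarrow> (nat \<Rightarrow> nat \<Rightarrow> real)" where
  "erm_step p q d m n x y = (THE v. erm_feasible d m n x v \<and>
     (\<forall>w. erm_feasible d m n x w \<longrightarrow> Lpq_loss p q m n y v \<le> Lpq_loss p q m n y w) \<and>
     (\<forall>w. erm_feasible d m n x w \<and> Lpq_loss p q m n y w = Lpq_loss p q m n y v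
          \<longrightarrow> sqnorm2 m n v \<le> sqnorm2 m n w))"

definition aggregation_step :: "real \<Rightarrow> real \<Rightarrow> nat \<Rightarrow> nat \<Rightarrow>
    (nat \<Rightarrow> nat \<Rightarrow> real) \<Rightarrow> (nat \<Rightarrow> real)" where
  "aggregation_step p q m n yh = (THE s. (\<forall>a\<ge>n. s a = 0) \<and>
     (\<forall>t. (\<forall>a\<ge>n. t a = 0) \<longrightarrow>
          Lpq_loss p q m n yh (\<lambda>i a. s a) \<le> Lpq_loss p q m n yh (\<lambda>i a. t a)) \<and>
     (\<forall>t. (\<forall>a\<ge>n. t a = 0) \<and>
          Lpq_loss p q m n yh (\<lambda>i a. t a) = Lpq_loss p q m n yh (\<lambda>i a. s a)
          \<longrightarrow> (\<Sum>a<n. (s a)\<^sup>2) \<le> (\<Sum>a<n. (t a)\<^sup>2)))"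

definition Lpq_method :: "real \<Rightarrow> real \<Rightarrow> nat \<Rightarrow> nat \<Rightarrow> nat \<Rightarrow>
    (nat \<Rightarrow> nat \<Rightarrow> nat \<Rightarrow> real) \<Rightarrow> (nat \<Rightarrow> nat \<Rightarrow> real) \<Rightarrow> (nat \<Rightarrow> real)" where
  "Lpq_method p q d m n x y = aggregation_step p q m n (erm_step p q d m n x y)"

end

theory Submission
  imports Defs
begin

text \<open>Two reviewers score two papers on two criteria with the incomparable points
  P = (5,5) and Q = (0,10), reviewer i giving P to paper i, and both recommend 0 for paper 0 and
  10 for paper 1. Each reviewer alone is consistent, but a common monotone h has one value c1 at P
  and one value c2 at Q, and the chosen fit has c1 = c2: for p > 1 strict convexity of the loss
  forces c1 + c2 = 10 and the least-norm tie break picks c1 = c2 = 5; for p = 1 the fit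
  c1 = c2 = 0 is optimal and has least norm. So both papers get the same aggregate, at most 5.
  Shifting reviewer 1's points by (e, -e) separates them from P and Q, and the step function that
  is 10 above Q or above P + (e, -e) and 0 elsewhere then fits every recommendation exactly:
  paper 1 jumps to 10 however small e > 0 is.\<close>

lemma powr_midpoint_less:
  fixes r a b :: real
  assumes r: "1 < r" and a: "0 \<le> a" and ab: "a < b"
  shows "2 * ((a + b) / 2) powr r < a powr r + b powr r"
proof (cases "a = 0")
  case True
  have "2 powr 1 < 2 powr r"
    using r by (intro powr_less_mono) auto
  then have "2 * b powr r < 2 powr r * b powr r"
    using ab True by simp
  then show ?thesis
    using True by (simp add: powr_divide field_simps)
next
  case False
  define c where "c = (a + b) / 2"
  have ac: "a < c" and cb: "c < b"
    using ab by (auto simp: c_def)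
  have deriv: "((\<lambda>z. z powr r) has_real_derivative r * z powr (r - 1)) (at z)"
    if "0 < z" for z :: real
    using that by (rule has_real_derivative_powr)
  obtain z1 where z1: "a < z1" "z1 < c" "c powr r - a powr r = (c - a) * (r * z1 powr (r - 1))"
    using MVT2[OF ac, of "\<lambda>z. z powr r" "\<lambda>z. r * z powr (r - 1)"] deriv a False by force
  obtain z2 where z2: "c < z2" "z2 < b" "b powr r - c powr r = (b - c) * (r * z2 powr (r - 1))"
    using MVT2[OF cb, of "\<lambda>z. z powr r" "\<lambda>z. r * z powr (r - 1)"] deriv a False ac
    by force
  have "z1 powr (r - 1) < z2 powr (r - 1)"
    using z1 z2 a r by (intro powr_less_mono2) auto
  moreover have "c - a = b - c" and "0 < (c - a) * r"
    using ab r by (auto simp: c_def field_simps)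
  ultimately have "c powr r - a powr r < b powr r - c powr r"
    unfolding z1(3) z2(3) by (metis mult.assoc mult_strict_left_mono)
  then show ?thesis
    by (simp add: c_def)
qed

lemma powr_midpoint_le:
  fixes r a b :: real
  assumes "1 \<le> r" "0 \<le> a" "0 \<le> b"
  shows "2 * ((a + b) / 2) powr r \<le> a powr r + b powr r"
proof -
  consider "r = 1 \<or> a = b" | "1 < r" "a < b" | "1 < r" "b < a"
    using assms by linarith
  then show ?thesis
    using powr_midpoint_less[of r a b] powr_midpoint_less[of r b a] assms
    by cases (auto simp: add.commute)
qed

lemma midpoint_le_power_sum:
  fixes p q a b :: real
  assumes p: "1 \<le> p" and q: "0 < q" and a: "0 \<le> a" and b: "0 \<le> b"
  shows "2 powr (q / p) * ((a + b) / 2) powr q \<le> (a powr p + b powr p) powr (q / p)"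
proof -
  have "2 powr (q / p) * ((a + b) / 2) powr q = (2 * ((a + b) / 2) powr p) powr (q / p)"
    using p a b by (simp add: powr_mult powr_powr)
  also have "\<dots> \<le> (a powr p + b powr p) powr (q / p)"
    using powr_midpoint_le[OF p a b] p q a b by (intro powr_mono2) auto
  finally show ?thesis .
qed

lemma midpoint_less_power_sum:
  fixes p q a b :: real
  assumes p: "1 < p" and q: "0 < q" and a: "0 \<le> a" and b: "0 \<le> b" and ab: "a \<noteq> b"
  shows "2 powr (q / p) * ((a + b) / 2) powr q < (a powr p + b powr p) powr (q / p)"
proof -
  have "2 powr (q / p) * ((a + b) / 2) powr q = (2 * ((a + b) / 2) powr p) powr (q / p)"
    using p a b by (simp add: powr_mult powr_powr)
  also have "\<dots> < (a powr p + b powr p) powr (q / p)"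
    using powr_midpoint_less[of p a b] powr_midpoint_less[of p b a] p q a b ab
    by (intro powr_less_mono2) (auto simp: add.commute neq_iff)
  finally show ?thesis .
qed

lemma Lpq_loss_nonneg: "0 \<le> Lpq_loss p q m n y v"
  unfolding Lpq_loss_def by simp

lemma Lpq_loss_eq_0_iff:
  assumes "0 < p" "0 < q"
  shows "Lpq_loss p q m n y v = 0 \<longleftrightarrow> (\<forall>i<m. \<forall>a<n. y i a = v i a)"
  unfolding Lpq_loss_def using assms
  by (auto simp: sum_nonneg_eq_0_iff)

lemma the_least_norm_minimizer:
  fixes L N :: "'a \<Rightarrow> real"
  assumes "F v"
    and "\<And>w. F w \<Longrightarrow> L v \<le> L w"
    and "\<And>w. F w \<Longrightarrow> L w = L v \<Longrightarrow> N v \<le> N w"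
    and "\<And>w. F w \<Longrightarrow> L w = L v \<Longrightarrow> N w = N v \<Longrightarrow> w = v"
  shows "(THE v. F v \<and> (\<forall>w. F w \<longrightarrow> L v \<le> L w) \<and>
            (\<forall>w. F w \<and> L w = L v \<longrightarrow> N v \<le> N w)) = v"
proof (rule the_equality)
  fix u
  assume u: "F u \<and> (\<forall>w. F w \<longrightarrow> L u \<le> L w) \<and> (\<forall>w. F w \<and> L w = L u \<longrightarrow> N u \<le> N w)"
  then have "L u = L v"
    using assms(1,2) by (simp add: order_antisym)
  moreover have "N u = N v"
    using u assms(1,3) \<open>L u = L v\<close> by (metis order_antisym)
  ultimately show "u = v"
    using u assms(4) by blast
qed (use assms in auto)

lemma the_unique_minimizer:
  fixes L N :: "'a \<Rightarrow> real"
  assumes "F v" and "\<And>w. F w \<Longrightarrow> L v \<le> L w" and "\<And>w. F w \<Longrightarrow> L w = L v \<Longrightarrow> w = v"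
  shows "(THE v. F v \<and> (\<forall>w. F w \<longrightarrow> L v \<le> L w) \<and>
            (\<forall>w. F w \<and> L w = L v \<longrightarrow> N v \<le> N w)) = v"
  using assms by (intro the_least_norm_minimizer) auto

lemma erm_step_exact_fit:
  assumes "0 < p" "0 < q"
    and feasible: "erm_feasible d m n x v" and fit: "\<forall>i<m. \<forall>a<n. v i a = y i a"
  shows "erm_step p q d m n x y = v"
  unfolding erm_step_def
proof (rule the_unique_minimizer)
  have zero: "Lpq_loss p q m n y v = 0"
    using fit Lpq_loss_eq_0_iff[OF assms(1,2)] by simp
  show "Lpq_loss p q m n y v \<le> Lpq_loss p q m n y w" for w
    using zero Lpq_loss_nonneg by simp
  show "w = v"
    if "erm_feasible d m n x w" "Lpq_loss p q m n y w = Lpq_loss p q m n y v" for w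
  proof (intro ext)
    fix i a
    show "w i a = v i a"
      using that zero fit feasible Lpq_loss_eq_0_iff[OF assms(1,2)]
      unfolding erm_feasible_def by (metis not_le)
  qed
qed (fact feasible)

lemma aggregation_step_consensus:
  assumes "0 < p" "0 < q" "0 < m"
    and consensus: "\<forall>i<m. \<forall>a<n. yh i a = t a" and outside: "\<forall>a\<ge>n. t a = 0"
  shows "aggregation_step p q m n yh = t"
  unfolding aggregation_step_def
proof (rule the_unique_minimizer)
  have zero: "Lpq_loss p q m n yh (\<lambda>i a. t a) = 0"
    using consensus Lpq_loss_eq_0_iff[OF assms(1,2)] by simp
  show "Lpq_loss p q m n yh (\<lambda>i a. t a) \<le> Lpq_loss p q m n yh (\<lambda>i a. s a)" for s
    using zero Lpq_loss_nonneg by simp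
  show "s = t" if "\<forall>a\<ge>n. s a = 0"
    and "Lpq_loss p q m n yh (\<lambda>i a. s a) = Lpq_loss p q m n yh (\<lambda>i a. t a)" for s
  proof
    fix a
    show "s a = t a"
      using that zero consensus outside \<open>0 < m\<close> Lpq_loss_eq_0_iff[OF assms(1,2)]
      by (metis not_le)
  qed
qed (fact outside)

lemma Lpq_method_exact_consensus:
  assumes "0 < p" "0 < q" "0 < m" and h: "monotonic_fn d h"
    and fit: "\<forall>i<m. \<forall>a<n. h (x i a) = t a \<and> y i a = t a" and outside: "\<forall>a\<ge>n. t a = 0"
  shows "Lpq_method p q d m n x y = t"
proof -
  define v where "v = (\<lambda>i a. if i < m \<and> a < n then t a else 0)"
  have "erm_feasible d m n x v"
    unfolding erm_feasible_def v_def using h fit by auto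
  then have "erm_step p q d m n x y = v"
    using fit by (intro erm_step_exact_fit[OF assms(1,2)]) (auto simp: v_def)
  then show ?thesis
    unfolding Lpq_method_def using assms(1-3) outside
    by (simp add: aggregation_step_consensus v_def)
qed

definition upper_step :: "nat \<Rightarrow> (nat \<Rightarrow> real) set \<Rightarrow> (nat \<Rightarrow> real) \<Rightarrow> real" where
  "upper_step d Z u = (if \<exists>z\<in>Z. \<forall>k<d. z k \<le> u k then 10 else 0)"

lemma monotonic_upper_step: "monotonic_fn d (upper_step d Z)"
  unfolding monotonic_fn_def upper_step_def by auto (meson order_trans)

lemma monotonic_const: "0 \<le> c \<Longrightarrow> c \<le> 10 \<Longrightarrow> monotonic_fn d (\<lambda>u. c)"
  unfolding monotonic_fn_def by simp

definition score_mid :: "nat \<Rightarrow> real" where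
  "score_mid = (\<lambda>k. 5)"

definition score_corner :: "nat \<Rightarrow> real" where
  "score_corner = (\<lambda>k. if k = 0 then 0 else 10)"

definition tilt :: "real \<Rightarrow> (nat \<Rightarrow> real) \<Rightarrow> nat \<Rightarrow> real" where
  "tilt e z = (\<lambda>k. if k = 0 then z k + e else z k - e)"

definition conflict_scores :: "nat \<Rightarrow> nat \<Rightarrow> nat \<Rightarrow> real" where
  "conflict_scores i a = (if i = a then score_mid else score_corner)"

definition split_scores :: "real \<Rightarrow> nat \<Rightarrow> nat \<Rightarrow> nat \<Rightarrow> real" where
  "split_scores e i a = (if i = 1 then tilt e (conflict_scores i a) else conflict_scores i a)"

definition recs :: "nat \<Rightarrow> nat \<Rightarrow> real" where
  "recs i a = (if a = 1 then 10 else 0)"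

definition conflict_fit :: "real \<Rightarrow> real \<Rightarrow> nat \<Rightarrow> nat \<Rightarrow> real" where
  "conflict_fit c1 c2 = (\<lambda>i a. if i < 2 \<and> a < 2 then if i = a then c1 else c2 else 0)"

definition conflict_loss :: "real \<Rightarrow> real \<Rightarrow> real \<Rightarrow> real \<Rightarrow> real" where
  "conflict_loss p q c1 c2 =
     (c1 powr p + (10 - c2) powr p) powr (q / p) + (c2 powr p + (10 - c1) powr p) powr (q / p)"

lemma conflict_scores_in_box: "conflict_scores i a \<in> score_box 2"
  by (simp add: conflict_scores_def score_box_def score_mid_def score_corner_def)

lemma split_scores_in_box: "0 \<le> e \<Longrightarrow> e \<le> 5 \<Longrightarrow> split_scores e i a \<in> score_box 2"
  by (simp add: split_scores_def tilt_def conflict_scores_def score_box_def score_mid_def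
      score_corner_def)

lemma split_scores_dist: "0 \<le> e \<Longrightarrow> \<bar>split_scores e i a k - conflict_scores i a k\<bar> \<le> e"
  by (simp add: split_scores_def tilt_def)

lemma recs_consistent_conflict:
  assumes "i < 2"
  shows "\<exists>h. monotonic_fn 2 h \<and> (\<forall>a<2. recs i a = h (conflict_scores i a))"
proof (intro exI conjI)
  show "monotonic_fn 2 (upper_step 2 {conflict_scores i 1})"
    by (rule monotonic_upper_step)
  show "\<forall>a<2. recs i a = upper_step 2 {conflict_scores i 1} (conflict_scores i a)"
    using assms
    by (auto simp: less_2_cases_iff recs_def upper_step_def conflict_scores_def score_mid_def
        score_corner_def)
qed

lemma Lpq_method_split:
  assumes "0 < p" "0 < q" "0 < e"
  shows "Lpq_method p q 2 2 2 (split_scores e) recs = (\<lambda>a. if a = 1 then 10 else 0)"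
proof (rule Lpq_method_exact_consensus[OF assms(1,2)])
  show "monotonic_fn 2 (upper_step 2 {score_corner, tilt e score_mid})"
    by (rule monotonic_upper_step)
  show "\<forall>i<2. \<forall>a<2. upper_step 2 {score_corner, tilt e score_mid} (split_scores e i a)
      = (if a = 1 then 10 else 0) \<and> recs i a = (if a = 1 then 10 else 0)"
    using \<open>0 < e\<close>
    by (auto simp: less_2_cases_iff recs_def upper_step_def split_scores_def conflict_scores_def
        tilt_def score_mid_def score_corner_def)
qed auto

lemma erm_feasible_conflict_fit:
  "0 \<le> c \<Longrightarrow> c \<le> 10 \<Longrightarrow> erm_feasible 2 2 2 conflict_scores (conflict_fit c c)"
  unfolding erm_feasible_def conflict_fit_def using monotonic_const[of c 2] by auto

lemma erm_feasible_conflictE: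
  assumes "erm_feasible 2 2 2 conflict_scores w"
  obtains c1 c2 where "0 \<le> c1" "c1 \<le> 10" "0 \<le> c2" "c2 \<le> 10" "w = conflict_fit c1 c2"
proof -
  obtain h where h: "monotonic_fn 2 h" and w: "\<forall>i<2. \<forall>a<2. w i a = h (conflict_scores i a)"
    and outside: "\<forall>i a. 2 \<le> i \<or> 2 \<le> a \<longrightarrow> w i a = 0"
    using assms unfolding erm_feasible_def by blast
  have "w = conflict_fit (h score_mid) (h score_corner)"
  proof (intro ext)
    fix i a
    show "w i a = conflict_fit (h score_mid) (h score_corner) i a"
      using w outside unfolding conflict_fit_def conflict_scores_def
      by (cases "i < 2 \<and> a < 2") auto
  qed
  moreover have "0 \<le> h u" "h u \<le> 10" if "u \<in> score_box 2" for u
    using h that unfolding monotonic_fn_def by auto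
  ultimately show thesis
    using that[of "h score_mid" "h score_corner"]
      conflict_scores_in_box[of 0 0] conflict_scores_in_box[of 0 1]
    by (simp add: conflict_scores_def)
qed

lemma Lpq_loss_conflict_fit:
  assumes "0 \<le> c1" "c1 \<le> 10" "0 \<le> c2" "c2 \<le> 10"
  shows "Lpq_loss p q 2 2 recs (conflict_fit c1 c2) = conflict_loss p q c1 c2 powr (1 / q)"
  using assms
  by (simp add: Lpq_loss_def conflict_loss_def conflict_fit_def recs_def numeral_2_eq_2)

lemma sqnorm2_conflict_fit: "sqnorm2 2 2 (conflict_fit c1 c2) = 2 * c1\<^sup>2 + 2 * c2\<^sup>2"
  by (simp add: sqnorm2_def conflict_fit_def numeral_2_eq_2)

lemma sqnorm2_conflict_fit_balanced:
  assumes "c1 + c2 = 10"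
  shows "sqnorm2 2 2 (conflict_fit c1 c2) = 100 + (c1 - c2)\<^sup>2"
proof -
  have "c2 = 10 - c1"
    using assms by linarith
  then show ?thesis
    by (simp add: sqnorm2_conflict_fit power2_eq_square algebra_simps del: eq_diff_eq)
qed

lemma conflict_mean_bound:
  fixes p q c1 c2 :: real
  assumes q: "1 \<le> q" and c: "0 \<le> c1" "c1 \<le> 10" "0 \<le> c2" "c2 \<le> 10"
  shows "2 * 2 powr (q / p) * 5 powr q \<le>
    2 powr (q / p) * ((c1 + (10 - c2)) / 2) powr q + 2 powr (q / p) * ((c2 + (10 - c1)) / 2) powr q"
proof -
  have "((c1 + (10 - c2)) / 2 + (c2 + (10 - c1)) / 2) / 2 = 5"
    by (simp add: field_simps)
  then have "2 * 5 powr q \<le> ((c1 + (10 - c2)) / 2) powr q + ((c2 + (10 - c1)) / 2) powr q"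
    using powr_midpoint_le[of q "(c1 + (10 - c2)) / 2" "(c2 + (10 - c1)) / 2"] q c by simp
  then have "2 powr (q / p) * (2 * 5 powr q)
      \<le> 2 powr (q / p) * (((c1 + (10 - c2)) / 2) powr q + ((c2 + (10 - c1)) / 2) powr q)"
    by (rule mult_left_mono) simp
  then show ?thesis
    by (simp add: algebra_simps)
qed

lemma conflict_loss_ge:
  assumes p: "1 \<le> p" and q: "1 \<le> q" and c: "0 \<le> c1" "c1 \<le> 10" "0 \<le> c2" "c2 \<le> 10"
  shows "2 * 2 powr (q / p) * 5 powr q \<le> conflict_loss p q c1 c2"
proof -
  have "2 powr (q / p) * ((c1 + (10 - c2)) / 2) powr q \<le> (c1 powr p + (10 - c2) powr p) powr (q / p)"
    and "2 powr (q / p) * ((c2 + (10 - c1)) / 2) powr q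
      \<le> (c2 powr p + (10 - c1) powr p) powr (q / p)"
    using assms by (intro midpoint_le_power_sum; simp)+
  then show ?thesis
    using conflict_mean_bound[OF q c, of p] unfolding conflict_loss_def by linarith
qed

lemma conflict_loss_greater:
  assumes p: "1 < p" and q: "1 \<le> q" and c: "0 \<le> c1" "c1 \<le> 10" "0 \<le> c2" "c2 \<le> 10"
    and "c1 + c2 \<noteq> 10"
  shows "2 * 2 powr (q / p) * 5 powr q < conflict_loss p q c1 c2"
proof -
  have "2 powr (q / p) * ((c1 + (10 - c2)) / 2) powr q < (c1 powr p + (10 - c2) powr p) powr (q / p)"
    using assms by (intro midpoint_less_power_sum) auto
  moreover have "2 powr (q / p) * ((c2 + (10 - c1)) / 2) powr q
      \<le> (c2 powr p + (10 - c1) powr p) powr (q / p)"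
    using assms by (intro midpoint_le_power_sum) auto
  ultimately show ?thesis
    using conflict_mean_bound[OF q c, of p] unfolding conflict_loss_def by linarith
qed

lemma Lpq_loss_conflict_ge:
  assumes "1 \<le> p" "1 \<le> q" and "erm_feasible 2 2 2 conflict_scores w"
  shows "(2 * 2 powr (q / p) * 5 powr q) powr (1 / q) \<le> Lpq_loss p q 2 2 recs w"
proof -
  obtain c1 c2 where c: "0 \<le> c1" "c1 \<le> 10" "0 \<le> c2" "c2 \<le> 10" and w: "w = conflict_fit c1 c2"
    using assms(3) by (rule erm_feasible_conflictE)
  show ?thesis
    unfolding w Lpq_loss_conflict_fit[OF c] using conflict_loss_ge[OF assms(1,2) c] assms(2)
    by (intro powr_mono2) auto
qed

lemma conflict_minimizer_balanced:
  assumes "1 < p" "1 \<le> q" and c: "0 \<le> c1" "c1 \<le> 10" "0 \<le> c2" "c2 \<le> 10"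
    and "Lpq_loss p q 2 2 recs (conflict_fit c1 c2) \<le> (2 * 2 powr (q / p) * 5 powr q) powr (1 / q)"
  shows "c1 + c2 = 10"
proof (rule ccontr)
  assume "c1 + c2 \<noteq> 10"
  then have "(2 * 2 powr (q / p) * 5 powr q) powr (1 / q) < conflict_loss p q c1 c2 powr (1 / q)"
    using conflict_loss_greater[OF assms(1,2) c] assms(2) by (intro powr_less_mono2) auto
  then show False
    using assms(7) Lpq_loss_conflict_fit[OF c] by simp
qed

lemma erm_step_conflict_p1:
  assumes "1 \<le> q"
  shows "erm_step 1 q 2 2 2 conflict_scores recs = conflict_fit 0 0"
  unfolding erm_step_def
proof (rule the_least_norm_minimizer)
  have "Lpq_loss 1 q 2 2 recs (conflict_fit 0 0) = (2 * 2 powr q * 5 powr q) powr (1 / q)"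
    using powr_mult[of 2 5 q] by (simp add: Lpq_loss_conflict_fit conflict_loss_def mult.assoc)
  then show "Lpq_loss 1 q 2 2 recs (conflict_fit 0 0) \<le> Lpq_loss 1 q 2 2 recs w"
    if "erm_feasible 2 2 2 conflict_scores w" for w
    using Lpq_loss_conflict_ge[of 1 q w] assms that by simp
  show "sqnorm2 2 2 (conflict_fit 0 0) \<le> sqnorm2 2 2 w" for w
    by (simp add: sqnorm2_conflict_fit) (simp add: sqnorm2_def sum_nonneg)
  show "w = conflict_fit 0 0"
    if feasible: "erm_feasible 2 2 2 conflict_scores w"
      and norm: "sqnorm2 2 2 w = sqnorm2 2 2 (conflict_fit 0 0)" for w
  proof -
    obtain c1 c2 where "w = conflict_fit c1 c2"
      using feasible by (rule erm_feasible_conflictE)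
    moreover have "2 * c1\<^sup>2 + 2 * c2\<^sup>2 = 0"
      using norm by (simp add: \<open>w = conflict_fit c1 c2\<close> sqnorm2_conflict_fit)
    then have "c1\<^sup>2 + c2\<^sup>2 = 0"
      by linarith
    ultimately show ?thesis
      by simp
  qed
qed (simp add: erm_feasible_conflict_fit)

lemma erm_step_conflict:
  assumes "1 < p" "1 \<le> q"
  shows "erm_step p q 2 2 2 conflict_scores recs = conflict_fit 5 5"
  unfolding erm_step_def
proof (rule the_least_norm_minimizer)
  have min: "Lpq_loss p q 2 2 recs (conflict_fit 5 5)
      = (2 * 2 powr (q / p) * 5 powr q) powr (1 / q)"
    using assms by (simp add: Lpq_loss_conflict_fit conflict_loss_def powr_mult powr_powr)
  then show "Lpq_loss p q 2 2 recs (conflict_fit 5 5) \<le> Lpq_loss p q 2 2 recs w"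
    if "erm_feasible 2 2 2 conflict_scores w" for w
    using Lpq_loss_conflict_ge[of p q w] assms that by simp
  have balanced: "\<exists>c1 c2. w = conflict_fit c1 c2 \<and> c1 + c2 = 10"
    if feasible: "erm_feasible 2 2 2 conflict_scores w"
      and loss: "Lpq_loss p q 2 2 recs w = Lpq_loss p q 2 2 recs (conflict_fit 5 5)" for w
  proof -
    obtain c1 c2 where c: "0 \<le> c1" "c1 \<le> 10" "0 \<le> c2" "c2 \<le> 10" "w = conflict_fit c1 c2"
      using feasible by (rule erm_feasible_conflictE)
    then have "c1 + c2 = 10"
      using conflict_minimizer_balanced[OF assms c(1-4)] loss min by simp
    then show ?thesis
      using c(5) by blast
  qed
  show "sqnorm2 2 2 (conflict_fit 5 5) \<le> sqnorm2 2 2 w"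
    if "erm_feasible 2 2 2 conflict_scores w"
      "Lpq_loss p q 2 2 recs w = Lpq_loss p q 2 2 recs (conflict_fit 5 5)" for w
    using balanced[OF that] by (auto simp: sqnorm2_conflict_fit_balanced)
  show "w = conflict_fit 5 5"
    if feasible: "erm_feasible 2 2 2 conflict_scores w"
      and loss: "Lpq_loss p q 2 2 recs w = Lpq_loss p q 2 2 recs (conflict_fit 5 5)"
      and norm: "sqnorm2 2 2 w = sqnorm2 2 2 (conflict_fit 5 5)" for w
  proof -
    obtain c1 c2 where w: "w = conflict_fit c1 c2" and "c1 + c2 = 10"
      using balanced[OF feasible loss] by blast
    moreover have "(c1 - c2)\<^sup>2 = 0"
      using norm \<open>c1 + c2 = 10\<close> by (simp add: w sqnorm2_conflict_fit_balanced)
    ultimately show ?thesis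
      by simp
  qed
qed (simp add: erm_feasible_conflict_fit)

lemma Lpq_method_conflict:
  assumes "1 \<le> p" "1 \<le> q"
  shows "Lpq_method p q 2 2 2 conflict_scores recs
    = (\<lambda>a. if a < 2 then if p = 1 then 0 else 5 else 0)"
proof -
  define k :: real where "k = (if p = 1 then 0 else 5)"
  have "erm_step p q 2 2 2 conflict_scores recs = conflict_fit k k"
    using erm_step_conflict_p1 erm_step_conflict assms by (cases "p = 1") (auto simp: k_def)
  then show ?thesis
    unfolding Lpq_method_def using assms
    by (intro aggregation_step_consensus) (auto simp: conflict_fit_def k_def)
qed

theorem theorem4p5:
  fixes p q :: real
  assumes "1 \<le> p" and "1 \<le> q"
  shows "\<exists>(d::nat) (m::nat) (n::nat) (x::nat \<Rightarrow> nat \<Rightarrow> nat \<Rightarrow> real) (y::nat \<Rightarrow> nat \<Rightarrow> real).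
     1 \<le> d \<and>
     (\<forall>i<m. \<forall>a<n. x i a \<in> score_box d) \<and>
     (\<forall>i<m. \<exists>h. monotonic_fn d h \<and> (\<forall>a<n. y i a = h (x i a))) \<and>
     (\<exists>\<epsilon>>0. \<forall>\<delta>>0. \<exists>x'::nat \<Rightarrow> nat \<Rightarrow> nat \<Rightarrow> real.
        (\<forall>i<m. \<forall>a<n. x' i a \<in> score_box d) \<and>
        (\<forall>i<m. \<forall>a<n. \<forall>k<d. \<bar>x' i a k - x i a k\<bar> < \<delta>) \<and>
        (\<exists>a<n. \<epsilon> \<le> \<bar>Lpq_method p q d m n x' y a - Lpq_method p q d m n x y a\<bar>))"
proof -
  have jump: "\<exists>x'. (\<forall>i<2. \<forall>a<2. x' i a \<in> score_box 2) \<and>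
      (\<forall>i<2. \<forall>a<2. \<forall>k<2. \<bar>x' i a k - conflict_scores i a k\<bar> < \<delta>) \<and>
      (\<exists>a<2. 5 \<le> \<bar>Lpq_method p q 2 2 2 x' recs a - Lpq_method p q 2 2 2 conflict_scores recs a\<bar>)"
    if "0 < \<delta>" for \<delta> :: real
  proof -
    define e where "e = min (\<delta> / 2) 1"
    have e: "0 < e" "e \<le> 5" "e < \<delta>"
      using that by (auto simp: e_def)
    have "\<bar>split_scores e i a k - conflict_scores i a k\<bar> < \<delta>" for i a k
      using split_scores_dist[of e i a k] e by linarith
    moreover have "5 \<le> \<bar>Lpq_method p q 2 2 2 (split_scores e) recs 1
        - Lpq_method p q 2 2 2 conflict_scores recs 1\<bar>"
      using Lpq_method_split[of p q e] Lpq_method_conflict[OF assms] assms e by simp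
    ultimately show ?thesis
      using split_scores_in_box[of e] e
      by (intro exI[of _ "split_scores e"]) (auto intro: exI[of _ 1])
  qed
  then show ?thesis
    using conflict_scores_in_box recs_consistent_conflict
    by (intro exI[of _ "2::nat"] exI[of _ conflict_scores] exI[of _ recs] exI[of _ "5::real"] conjI)
      auto
qed

end
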